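(* Let $Q$ be a finite quiver with vertex set $Q_0$ and arrow set $Q_1$, let $k$ be an algebraically closed field of arbitrary characteristic, and let $\Theta,\sigma:\mathbb{Z}Q_0\to\mathbb{Z}$ be linear functions with $\sigma_v>0$ for all $v\in Q_0$. Let $M$ be a finite dimensional representation of $Q$ over $k$ which is not $(\Theta,\sigma)$-semistable. Let $0\subset M_1\subset\cdots\subset M_t\subset M_{t+1}=M$ together with real weights $\Gamma_1<\Gamma_2<\cdots<\Gamma_{t+1}$ be the Kempf filtration of $M$, i.e. the weighted filtration of $M$ by subrepresentations at which the Kempf function $$K(M_\bullet,\Gamma)=\frac{\sum_{i=1}^{t+1}\Gamma_i\,[\Theta(M)\sigma(M^i)-\sigma(M)\Theta(M^i)]}{\sqrt{\sum_{i=1}^{t+1}\sigma(M^i)\Gamma_i^2}},\qquad M^i=M_i/M_{i-1},$$ attains its maximum among all weighted filtrations of $M$ by subrepresentations with strictly increasing real weights. Then the filtration $0\subset M_1\subset\cdots\subset M_{t+1}=M$ is the Harder-Narasimhan filtration of $M$ with respect to $(\Theta,\sigma)$.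
   Context: A representation $M$ of $Q$ over $k$ consists of finite dimensional $k$-vector spaces $M_v$ ($v\in Q_0$) and $k$-linear maps $M_\alpha:M_{v_i}\to M_{v_j}$ for each arrow $\alpha:v_i\to v_j$; its dimension vector is $\underline{\dim}M=\sum_v \dim_k M_v\cdot v\in\mathbb{N}Q_0$. Write $\Theta(M)=\sum_v\Theta_v\dim_kM_v$ and $\sigma(M)=\sum_v\sigma_v\dim_kM_v$, and for $M\neq 0$ define the slope $\mu_{(\Theta,\sigma)}(M)=\Theta(M)/\sigma(M)$. $M$ is $(\Theta,\sigma)$-semistable if $\mu_{(\Theta,\sigma)}(M')\le\mu_{(\Theta,\sigma)}(M)$ for all non-zero proper subrepresentations $M'\subset M$. A weighted filtration is a chain of subrepresentations $0\subset M_1\subset\cdots\subset M_{t+1}=M$ with strict inclusions (so each $M^i\neq0$ and $\sigma(M^i)>0$) together with real numbers $\Gamma_1<\cdots<\Gamma_{t+1}$. For an unstable $M$, such a maximizing weighted filtration exists and its filtration is unique (Kempf's theorem, applied to the action of $\prod_v GL(M_v)$ on the representation space with the character $\prod_v\det(g_v)^{\Theta(d)\sigma_v-\sigma(d)\Theta_v}$ and the length $\sqrt{\sum_i\sigma(M^i)\Gamma_i^2}$). The Harder-Narasimhan filtration of $M$ is the unique filtration $0\subset M_1\subset\cdots\subset M_{t+1}=M$ by subrepresentations such that, with $M^i=M_i/M_{i-1}$, one has $\mu_{(\Theta,\sigma)}(M^1)>\mu_{(\Theta,\sigma)}(M^2)>\cdots>\mu_{(\Theta,\sigma)}(M^{t+1})$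 and each $M^i$ is $(\Theta,\sigma)$-semistable. *)

theory Defs
  imports Main "HOL-Library.Function_Algebras" "HOL-Computational_Algebra.Polynomial"
begin

definition alg_closed :: "'k::field itself \<Rightarrow> bool" where
  "alg_closed _ \<longleftrightarrow> (\<forall>p :: 'k poly. degree p > 0 \<longrightarrow> (\<exists>x. poly p x = 0))"

(* Vectors in k^n are modelled as functions nat => k vanishing from index n on. *)
definition sc :: "'k::field \<Rightarrow> (nat \<Rightarrow> 'k) \<Rightarrow> (nat \<Rightarrow> 'k)" where
  "sc c x = (\<lambda>i. c * x i)"

definition ambient :: "nat \<Rightarrow> (nat \<Rightarrow> 'k::field) set" where
  "ambient n = {x. \<forall>i\<ge>n. x i = 0}"

definition vdim :: "(nat \<Rightarrow> 'k::field) set \<Rightarrow> nat" where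
  "vdim U = vector_space.dim (sc :: 'k \<Rightarrow> _) U"

(* A representation of the quiver with vertex type 'v, arrow type 'a, source map s,
   target map t: M_v = k^(d v), M_alpha given by a (d (t alpha)) x (d (s alpha)) matrix A alpha. *)
definition rep_map ::
  "('v \<Rightarrow> nat) \<Rightarrow> ('a \<Rightarrow> nat \<Rightarrow> nat \<Rightarrow> 'k::field) \<Rightarrow> ('a \<Rightarrow> 'v) \<Rightarrow> ('a \<Rightarrow> 'v)
     \<Rightarrow> 'a \<Rightarrow> (nat \<Rightarrow> 'k) \<Rightarrow> (nat \<Rightarrow> 'k)" where
  "rep_map d A s t \<alpha> x = (\<lambda>i. if i < d (t \<alpha>) then (\<Sum>j<d (s \<alpha>). A \<alpha> i j * x j) else 0)"

definition is_subrep ::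
  "('v \<Rightarrow> nat) \<Rightarrow> ('a \<Rightarrow> nat \<Rightarrow> nat \<Rightarrow> 'k::field) \<Rightarrow> ('a \<Rightarrow> 'v) \<Rightarrow> ('a \<Rightarrow> 'v)
     \<Rightarrow> ('v \<Rightarrow> (nat \<Rightarrow> 'k) set) \<Rightarrow> bool" where
  "is_subrep d A s t U \<longleftrightarrow>
     (\<forall>v. module.subspace (sc :: 'k \<Rightarrow> _) (U v) \<and> U v \<subseteq> ambient (d v)) \<and>
     (\<forall>\<alpha>. \<forall>x\<in>U (s \<alpha>). rep_map d A s t \<alpha> x \<in> U (t \<alpha>))"

definition zero_rep :: "'v \<Rightarrow> (nat \<Rightarrow> 'k::field) set" where
  "zero_rep = (\<lambda>v. {0})"

definition full_rep :: "('v \<Rightarrow> nat) \<Rightarrow> 'v \<Rightarrow> (nat \<Rightarrow> 'k::field) set" where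
  "full_rep d = (\<lambda>v. ambient (d v))"

definition lin_dim :: "('v::finite \<Rightarrow> int) \<Rightarrow> ('v \<Rightarrow> (nat \<Rightarrow> 'k::field) set) \<Rightarrow> int" where
  "lin_dim \<Theta> U = (\<Sum>v\<in>UNIV. \<Theta> v * int (vdim (U v)))"

(* Value of a linear function on the subquotient N/L (L \<subseteq> N subrepresentations):
   dim (N_v / L_v) = dim N_v - dim L_v. *)
definition lin_sq :: "('v::finite \<Rightarrow> int) \<Rightarrow> ('v \<Rightarrow> (nat \<Rightarrow> 'k::field) set)
     \<Rightarrow> ('v \<Rightarrow> (nat \<Rightarrow> 'k) set) \<Rightarrow> int" where
  "lin_sq \<Theta> L N = lin_dim \<Theta> N - lin_dim \<Theta> L"

definition slope_sq :: "('v::finite \<Rightarrow> int) \<Rightarrow> ('v \<Rightarrow> int) \<Rightarrow> ('v \<Rightarrow> (nat \<Rightarrow> 'k::field) set)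
     \<Rightarrow> ('v \<Rightarrow> (nat \<Rightarrow> 'k) set) \<Rightarrow> real" where
  "slope_sq \<Theta> \<sigma> L N = real_of_int (lin_sq \<Theta> L N) / real_of_int (lin_sq \<sigma> L N)"

(* Subrepresentations of N/L
   correspond to subrepresentations U of M with L \<subseteq> U \<subseteq> N (U/L is then the subrepresentation);
   non-zero proper means U \<noteq> L and U \<noteq> N. *)
definition semistable_sq ::
  "('v::finite \<Rightarrow> nat) \<Rightarrow> ('a \<Rightarrow> nat \<Rightarrow> nat \<Rightarrow> 'k::field) \<Rightarrow> ('a \<Rightarrow> 'v) \<Rightarrow> ('a \<Rightarrow> 'v)
     \<Rightarrow> ('v \<Rightarrow> int) \<Rightarrow> ('v \<Rightarrow> int) \<Rightarrow> ('v \<Rightarrow> (nat \<Rightarrow> 'k) set) \<Rightarrow> ('v \<Rightarrow> (nat \<Rightarrow> 'k) set) \<Rightarrow> bool" where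
  "semistable_sq d A s t \<Theta> \<sigma> L N \<longleftrightarrow>
     (\<forall>U. is_subrep d A s t U \<longrightarrow> (\<forall>v. L v \<subseteq> U v \<and> U v \<subseteq> N v) \<longrightarrow> U \<noteq> L \<longrightarrow> U \<noteq> N \<longrightarrow>
        slope_sq \<Theta> \<sigma> L U \<le> slope_sq \<Theta> \<sigma> L N)"

definition semistable ::
  "('v::finite \<Rightarrow> nat) \<Rightarrow> ('a \<Rightarrow> nat \<Rightarrow> nat \<Rightarrow> 'k::field) \<Rightarrow> ('a \<Rightarrow> 'v) \<Rightarrow> ('a \<Rightarrow> 'v)
     \<Rightarrow> ('v \<Rightarrow> int) \<Rightarrow> ('v \<Rightarrow> int) \<Rightarrow> bool" where
  "semistable d A s t \<Theta> \<sigma> \<longleftrightarrow> semistable_sq d A s t \<Theta> \<sigma> zero_rep (full_rep d)"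

(* A filtration 0 = F 0 \<subset> F 1 \<subset> ... \<subset> F (n+1) = M by subrepresentations
   (here n plays the role of t in the paper), strict inclusions. *)
definition is_filtration ::
  "('v::finite \<Rightarrow> nat) \<Rightarrow> ('a \<Rightarrow> nat \<Rightarrow> nat \<Rightarrow> 'k::field) \<Rightarrow> ('a \<Rightarrow> 'v) \<Rightarrow> ('a \<Rightarrow> 'v)
     \<Rightarrow> nat \<Rightarrow> (nat \<Rightarrow> 'v \<Rightarrow> (nat \<Rightarrow> 'k) set) \<Rightarrow> bool" where
  "is_filtration d A s t n F \<longleftrightarrow>
     F 0 = zero_rep \<and> F (n + 1) = full_rep d \<and>
     (\<forall>i\<in>{1..n+1}. is_subrep d A s t (F i)) \<and>
     (\<forall>i\<in>{1..n+1}. (\<forall>v. F (i - 1) v \<subseteq> F i v) \<and> F (i - 1) \<noteq> F i)"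

definition is_weighted_filtration ::
  "('v::finite \<Rightarrow> nat) \<Rightarrow> ('a \<Rightarrow> nat \<Rightarrow> nat \<Rightarrow> 'k::field) \<Rightarrow> ('a \<Rightarrow> 'v) \<Rightarrow> ('a \<Rightarrow> 'v)
     \<Rightarrow> nat \<Rightarrow> (nat \<Rightarrow> 'v \<Rightarrow> (nat \<Rightarrow> 'k) set) \<Rightarrow> (nat \<Rightarrow> real) \<Rightarrow> bool" where
  "is_weighted_filtration d A s t n F \<Gamma> \<longleftrightarrow>
     is_filtration d A s t n F \<and> (\<forall>i\<in>{1..n}. \<Gamma> i < \<Gamma> (i + 1))"

definition kempf_fun ::
  "('v::finite \<Rightarrow> nat) \<Rightarrow> ('v \<Rightarrow> int) \<Rightarrow> ('v \<Rightarrow> int)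
     \<Rightarrow> nat \<Rightarrow> (nat \<Rightarrow> 'v \<Rightarrow> (nat \<Rightarrow> 'k::field) set) \<Rightarrow> (nat \<Rightarrow> real) \<Rightarrow> real" where
  "kempf_fun d \<Theta> \<sigma> n F \<Gamma> =
     (\<Sum>i=1..n+1. \<Gamma> i *
        real_of_int (lin_dim \<Theta> (full_rep d :: 'v \<Rightarrow> (nat \<Rightarrow> 'k) set) * lin_sq \<sigma> (F (i - 1)) (F i)
                     - lin_dim \<sigma> (full_rep d :: 'v \<Rightarrow> (nat \<Rightarrow> 'k) set) * lin_sq \<Theta> (F (i - 1)) (F i)))
     / sqrt (\<Sum>i=1..n+1. real_of_int (lin_sq \<sigma> (F (i - 1)) (F i)) * (\<Gamma> i)\<^sup>2)"

definition is_HN_filtration ::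
  "('v::finite \<Rightarrow> nat) \<Rightarrow> ('a \<Rightarrow> nat \<Rightarrow> nat \<Rightarrow> 'k::field) \<Rightarrow> ('a \<Rightarrow> 'v) \<Rightarrow> ('a \<Rightarrow> 'v)
     \<Rightarrow> ('v \<Rightarrow> int) \<Rightarrow> ('v \<Rightarrow> int) \<Rightarrow> nat \<Rightarrow> (nat \<Rightarrow> 'v \<Rightarrow> (nat \<Rightarrow> 'k) set) \<Rightarrow> bool" where
  "is_HN_filtration d A s t \<Theta> \<sigma> n F \<longleftrightarrow>
     is_filtration d A s t n F \<and>
     (\<forall>i\<in>{1..n}. slope_sq \<Theta> \<sigma> (F (i - 1)) (F i) > slope_sq \<Theta> \<sigma> (F i) (F (i + 1))) \<and>
     (\<forall>i\<in>{1..n+1}. semistable_sq d A s t \<Theta> \<sigma> (F (i - 1)) (F i))"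

end

theory Submission
  imports Defs
begin

text \<open>With \<open>C\<^sub>j = \<Theta>(M) \<sigma>(M\<^sup>j) - \<sigma>(M) \<Theta>(M\<^sup>j)\<close> and \<open>S\<^sub>j = \<sigma>(M\<^sup>j) > 0\<close> the Kempf function is
  \<open>\<Sum> \<Gamma>\<^sub>j C\<^sub>j / sqrt (\<Sum> S\<^sub>j \<Gamma>\<^sub>j\<^sup>2)\<close>, and \<open>C\<^sub>j / S\<^sub>j = \<Theta>(M) - \<sigma>(M) \<mu>(M\<^sup>j)\<close>. For a fixed
  filtration, perturbing the optimal weights by \<open>e C\<^sub>j / S\<^sub>j\<close> keeps them increasing for small \<open>e\<close>,
  so optimality forces equality in the Cauchy-Schwarz inequality: the optimal weights are a positive
  multiple of \<open>C\<^sub>j / S\<^sub>j\<close> (the maximum is positive because \<open>M\<close> is unstable). Increasing weights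
  thus mean strictly decreasing slopes. If a factor \<open>M\<^sup>i\<close> had a subrepresentation of larger slope,
  inserting it into the filtration and giving it a slightly smaller weight than \<open>\<Gamma>\<^sub>i\<close> would raise
  the Kempf function, contradicting maximality; so every factor is semistable.\<close>

section \<open>Dimensions of subrepresentations\<close>

interpretation V: vector_space "sc :: 'k::field \<Rightarrow> (nat \<Rightarrow> 'k) \<Rightarrow> _"
  by unfold_locales (auto simp: sc_def fun_eq_iff algebra_simps)

lemma sum_fun_apply: "finite A \<Longrightarrow> (sum f A) x = (\<Sum>a\<in>A. f a x)"
  by (induction A rule: finite_induct) auto

definition unit_vec :: "nat \<Rightarrow> nat \<Rightarrow> 'k::field" where
  "unit_vec j = (\<lambda>i. if i = j then 1 else 0)"

lemma ambient_subset_span_unit_vec: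
  "ambient n \<subseteq> V.span ((unit_vec :: nat \<Rightarrow> nat \<Rightarrow> 'k::field) ` {..<n})"
proof
  fix x :: "nat \<Rightarrow> 'k" assume x: "x \<in> ambient n"
  have "x = (\<Sum>j<n. sc (x j) (unit_vec j))"
  proof
    fix i
    have "(\<Sum>j<n. sc (x j) (unit_vec j)) i = (\<Sum>j\<in>{..<n}. if j = i then x j else 0)"
      unfolding sum_fun_apply[OF finite_lessThan] sc_def unit_vec_def by (rule sum.cong) auto
    also have "\<dots> = x i" using x by (auto simp: ambient_def)
    finally show "x i = (\<Sum>j<n. sc (x j) (unit_vec j)) i" by simp
  qed
  also have "\<dots> \<in> V.span (unit_vec ` {..<n})"
    by (intro V.span_sum V.span_scale V.span_base) auto
  finally show "x \<in> V.span (unit_vec ` {..<n})" .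
qed

lemma vdim_zero: "vdim ({0} :: (nat \<Rightarrow> 'k::field) set) = 0"
  unfolding vdim_def using V.dim_eq_card[of "{}" "{0::nat \<Rightarrow> 'k}"] by (simp add: V.independent_empty)

lemma vdim_mono:
  fixes U W :: "(nat \<Rightarrow> 'k::field) set"
  assumes U: "V.subspace U" and UW: "U \<subseteq> W" and W: "W \<subseteq> ambient n"
  shows "vdim U \<le> vdim W" and "U \<noteq> W \<Longrightarrow> vdim U < vdim W"
proof -
  obtain B where B: "B \<subseteq> U" "V.independent B" "U \<subseteq> V.span B" "card B = V.dim U"
    using V.basis_exists by blast
  obtain C where C: "B \<subseteq> C" "C \<subseteq> W" "V.independent C" "W \<subseteq> V.span C"
    using V.maximal_independent_subset_extend[of B W] B UW by blast
  have "finite C"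
    using V.independent_span_bound[OF _ C(3)] C(2) W ambient_subset_span_unit_vec by blast
  have dim_W: "card C = V.dim W" using V.basis_card_eq_dim C by blast
  show "vdim U \<le> vdim W"
    using card_mono[OF \<open>finite C\<close> C(1)] B(4) dim_W by (simp add: vdim_def)
  assume "U \<noteq> W"
  have "B \<noteq> C"
  proof
    assume "B = C"
    then have "W \<subseteq> U" using C(4) V.span_minimal[OF B(1) U] by blast
    then show False using \<open>U \<noteq> W\<close> UW by blast
  qed
  then have "card B < card C"
    using C(1) \<open>finite C\<close> by (simp add: psubset_card_mono psubset_eq)
  then show "vdim U < vdim W" using B(4) dim_W by (simp add: vdim_def)
qed

lemma lin_dim_zero: "lin_dim \<sigma> (zero_rep :: 'v::finite \<Rightarrow> (nat \<Rightarrow> 'k::field) set) = 0"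
  unfolding lin_dim_def zero_rep_def by (simp add: vdim_zero)

lemma lin_sq_pos:
  fixes L N :: "'v::finite \<Rightarrow> (nat \<Rightarrow> 'k::field) set"
  assumes \<sigma>: "\<forall>v. \<sigma> v > 0"
    and L: "\<forall>v. V.subspace (L v)" and N: "\<forall>v. N v \<subseteq> ambient (d v)"
    and LN: "\<forall>v. L v \<subseteq> N v" "L \<noteq> N"
  shows "lin_sq \<sigma> L N > 0"
proof -
  have le: "\<sigma> v * int (vdim (L v)) \<le> \<sigma> v * int (vdim (N v))" for v
    using vdim_mono(1)[of "L v" "N v" "d v"] L N LN \<sigma> by (simp add: less_imp_le)
  obtain v where "L v \<noteq> N v" using LN(2) by blast
  then have "\<sigma> v * int (vdim (L v)) < \<sigma> v * int (vdim (N v))"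
    using vdim_mono(2)[of "L v" "N v" "d v"] L N LN \<sigma> by simp
  then have "lin_dim \<sigma> L < lin_dim \<sigma> N"
    unfolding lin_dim_def by (intro sum_strict_mono_ex1) (auto intro: le)
  then show ?thesis by (simp add: lin_sq_def)
qed

lemma filtration_subspace:
  assumes "is_filtration d A s t n F" "j \<le> n + 1"
  shows "V.subspace (F j v) \<and> F j v \<subseteq> ambient (d v)"
  using assms unfolding is_filtration_def is_subrep_def
  by (cases "j = 0") (auto simp: zero_rep_def ambient_def)

section \<open>Maximizing the Kempf ratio over increasing weights\<close>

definition kempf_ratio :: "(nat \<Rightarrow> real) \<Rightarrow> (nat \<Rightarrow> real) \<Rightarrow> nat \<Rightarrow> (nat \<Rightarrow> real) \<Rightarrow> real" where
  "kempf_ratio C S m G = (\<Sum>j=1..m. G j * C j) / sqrt (\<Sum>j=1..m. S j * (G j)\<^sup>2)"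

lemma weighted_cauchy_schwarz_eq:
  fixes S G a :: "'i \<Rightarrow> real"
  assumes "finite I" and S: "\<forall>j\<in>I. S j > 0"
    and le: "(\<Sum>j\<in>I. S j * (a j)\<^sup>2) * (\<Sum>j\<in>I. S j * (G j)\<^sup>2) \<le> (\<Sum>j\<in>I. S j * G j * a j)\<^sup>2"
    and j: "j \<in> I"
  shows "(\<Sum>j\<in>I. S j * (a j)\<^sup>2) * G j = (\<Sum>j\<in>I. S j * G j * a j) * a j"
proof -
  define p where "p = (\<Sum>j\<in>I. S j * G j * a j)"
  define q where "q = (\<Sum>j\<in>I. S j * (a j)\<^sup>2)"
  define r where "r = (\<Sum>j\<in>I. S j * (G j)\<^sup>2)"
  have "(\<Sum>j\<in>I. S j * (q * G j - p * a j)\<^sup>2)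
      = (\<Sum>j\<in>I. q\<^sup>2 * (S j * (G j)\<^sup>2) - (2 * q * p) * (S j * G j * a j) + p\<^sup>2 * (S j * (a j)\<^sup>2))"
    by (rule sum.cong) (auto simp: algebra_simps power2_eq_square)
  also have "\<dots> = q * (q * r - p\<^sup>2)"
    by (simp add: sum.distrib sum_subtractf flip: sum_distrib_left)
       (simp add: p_def q_def r_def algebra_simps power2_eq_square)
  also have "\<dots> \<le> 0"
  proof (rule mult_nonneg_nonpos)
    show "q \<ge> 0" using S unfolding q_def by (auto intro!: sum_nonneg)
    show "q * r - p\<^sup>2 \<le> 0" using le by (simp add: p_def q_def r_def)
  qed
  finally have "(\<Sum>j\<in>I. S j * (q * G j - p * a j)\<^sup>2) = 0"
    using S by (intro antisym sum_nonneg) auto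
  then have "S j * (q * G j - p * a j)\<^sup>2 = 0"
    using S j \<open>finite I\<close> by (subst (asm) sum_nonneg_eq_0_iff) auto
  then show ?thesis using S j by (force simp: p_def q_def)
qed

lemma increasing_perturbation:
  fixes G a :: "nat \<Rightarrow> real"
  assumes "\<forall>j\<in>{1..<m}. G j < G (j+1)"
  shows "\<exists>e>0. \<forall>j\<in>{1..<m}. G j + e * a j < G (j+1) + e * a (j+1)"
proof -
  have "\<forall>\<^sub>F e in at_right 0. \<forall>j\<in>{1..<m}. G j + e * a j < G (j+1) + e * a (j+1)"
  proof (intro eventually_ball_finite ballI finite_atLeastLessThan)
    fix j assume "j \<in> {1..<m}"
    have "((\<lambda>e. (G (j+1) + e * a (j+1)) - (G j + e * a j)) \<longlongrightarrow> G (j+1) - G j) (at_right 0)"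
      by (auto intro!: tendsto_eq_intros)
    moreover have "0 < G (j+1) - G j" using assms \<open>j \<in> {1..<m}\<close> by auto
    ultimately have "\<forall>\<^sub>F e in at_right 0. 0 < (G (j+1) + e * a (j+1)) - (G j + e * a j)"
      by (rule order_tendstoD(1))
    then show "\<forall>\<^sub>F e in at_right 0. G j + e * a j < G (j+1) + e * a (j+1)"
      by simp
  qed
  then have "\<forall>\<^sub>F e in at_right 0. e > 0 \<and> (\<forall>j\<in>{1..<m}. G j + e * a j < G (j+1) + e * a (j+1))"
    using eventually_at_right_less by (rule eventually_conj[rotated])
  then show ?thesis
    using eventually_happens[of _ "at_right (0::real)"] by auto
qed

lemma perturbed_ratio_le_imp_le_square:
  fixes p q r e :: real
  assumes p: "p > 0" and e: "e > 0" and q: "q \<ge> 0" and r: "r > 0"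
    and le: "(p + e * q) / sqrt (r + 2 * e * p + e\<^sup>2 * q) \<le> p / sqrt r"
  shows "q * r \<le> p\<^sup>2"
proof -
  define r' where "r' = r + 2 * e * p + e\<^sup>2 * q"
  have r': "r' > 0" unfolding r'_def using r e p q by (simp add: add_pos_nonneg)
  have "(p + e * q) * sqrt r \<le> p * sqrt r'"
    using le r r' by (simp add: r'_def divide_simps)
  then have "((p + e * q) * sqrt r)\<^sup>2 \<le> (p * sqrt r')\<^sup>2"
    using p e q r by (intro power_mono) auto
  then have "(p + e * q)\<^sup>2 * r \<le> p\<^sup>2 * r'"
    using r r' by (simp add: power_mult_distrib)
  then have "e * (2 * p + e * q) * (q * r - p\<^sup>2) \<le> 0"
    unfolding r'_def by (simp add: algebra_simps power2_eq_square)
  moreover have "e * (2 * p + e * q) > 0" using p e q by (simp add: add_pos_nonneg)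
  ultimately have "q * r - p\<^sup>2 \<le> 0" by (meson mult_pos_pos not_le)
  then show ?thesis by simp
qed

lemma kempf_ratio_perturb:
  fixes C S G a :: "nat \<Rightarrow> real"
  assumes C: "\<forall>j\<in>{1..m}. C j = S j * a j"
  shows "kempf_ratio C S m (\<lambda>j. G j + e * a j)
       = ((\<Sum>j=1..m. S j * G j * a j) + e * (\<Sum>j=1..m. S j * (a j)\<^sup>2))
         / sqrt ((\<Sum>j=1..m. S j * (G j)\<^sup>2) + 2 * e * (\<Sum>j=1..m. S j * G j * a j)
                 + e\<^sup>2 * (\<Sum>j=1..m. S j * (a j)\<^sup>2))"
proof -
  have "(\<Sum>j=1..m. (G j + e * a j) * C j) = (\<Sum>j=1..m. S j * G j * a j + e * (S j * (a j)\<^sup>2))"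
    using C by (intro sum.cong) (auto simp: algebra_simps power2_eq_square)
  moreover have "(\<Sum>j=1..m. S j * (G j + e * a j)\<^sup>2)
      = (\<Sum>j=1..m. S j * (G j)\<^sup>2 + 2 * e * (S j * G j * a j) + e\<^sup>2 * (S j * (a j)\<^sup>2))"
    by (rule sum.cong) (auto simp: algebra_simps power2_eq_square)
  ultimately show ?thesis
    by (simp add: kempf_ratio_def sum.distrib flip: sum_distrib_left)
qed

lemma kempf_ratio_argmax_proportional:
  fixes C S G :: "nat \<Rightarrow> real"
  assumes S: "\<forall>j\<in>{1..m}. S j > 0"
    and inc: "\<forall>j\<in>{1..<m}. G j < G (j+1)"
    and pos: "kempf_ratio C S m G > 0"
    and max: "\<forall>G'. (\<forall>j\<in>{1..<m}. G' j < G' (j+1)) \<longrightarrow> kempf_ratio C S m G' \<le> kempf_ratio C S m G"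
  shows "\<exists>l>0. \<forall>j\<in>{1..m}. G j = l * (C j / S j)"
proof -
  define a where "a j = C j / S j" for j
  define p where "p = (\<Sum>j=1..m. S j * G j * a j)"
  define q where "q = (\<Sum>j=1..m. S j * (a j)\<^sup>2)"
  define r where "r = (\<Sum>j=1..m. S j * (G j)\<^sup>2)"
  have C: "\<forall>j\<in>{1..m}. C j = S j * a j"
    using S by (force simp: a_def)
  have q: "q \<ge> 0" and r: "r \<ge> 0"
    using S unfolding q_def r_def by (auto intro!: sum_nonneg)
  have ratio: "kempf_ratio C S m (\<lambda>j. G j + e * a j) = (p + e * q) / sqrt (r + 2 * e * p + e\<^sup>2 * q)"
    for e
    unfolding p_def q_def r_def by (rule kempf_ratio_perturb[OF C])
  from ratio[of 0] have ratio_G: "kempf_ratio C S m G = p / sqrt r" by simp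
  have "r > 0" using pos r ratio_G by (cases "r = 0") auto
  moreover have "p > 0" using pos \<open>r > 0\<close> ratio_G by (simp add: zero_less_divide_iff)
  moreover obtain e where "e > 0" and "\<forall>j\<in>{1..<m}. G j + e * a j < G (j+1) + e * a (j+1)"
    using increasing_perturbation[OF inc] by blast
  ultimately have "q * r \<le> p\<^sup>2"
    using max q ratio ratio_G by (intro perturbed_ratio_le_imp_le_square[of p e q r]) auto
  then have proportional: "q * G j = p * a j" if "j \<in> {1..m}" for j
    using weighted_cauchy_schwarz_eq[OF finite_atLeastAtMost S _ that]
    by (simp add: p_def q_def r_def)
  have "q \<noteq> 0"
  proof
    assume "q = 0"
    then have "\<forall>j\<in>{1..m}. a j = 0" using proportional \<open>p > 0\<close> by simp
    then show False using \<open>p > 0\<close> by (simp add: p_def)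
  qed
  have "G j = p / q * (C j / S j)" if "j \<in> {1..m}" for j
  proof -
    have "G j = (q * G j) / q" using \<open>q \<noteq> 0\<close> by simp
    also have "\<dots> = p / q * a j" using proportional[OF that] by simp
    finally show ?thesis by (simp add: a_def)
  qed
  then show ?thesis using \<open>p > 0\<close> \<open>q \<noteq> 0\<close> q by (intro exI[of _ "p / q"]) auto
qed

lemma sum_insert_index:
  fixes h h' :: "nat \<Rightarrow> real"
  assumes i: "1 \<le> i" "i \<le> m" and below: "\<forall>j<i. h' j = h j" and above: "\<forall>j\<ge>i+2. h' j = h (j-1)"
  shows "(\<Sum>j=1..m+1. h' j) = (\<Sum>j=1..m. h j) - h i + h' i + h' (i+1)"
proof -
  obtain k where m: "m = i + k" using i le_Suc_ex by blast
  have "(\<Sum>j=1..i+k+1. h' j) = (\<Sum>j=1..i+k. h j) - h i + h' i + h' (i+1)"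
  proof (induction k)
    case 0
    obtain i0 where i0: "i = Suc i0" using i by (cases i) auto
    have "(\<Sum>j=1..i0. h' j) = (\<Sum>j=1..i0. h j)"
      using below i0 by (intro sum.cong) auto
    then show ?case using i0 by (simp add: sum.cl_ivl_Suc)
  next
    case (Suc k)
    have "h' (i + k + 2) = h (i + k + 1)" using above by force
    then show ?case using Suc by (simp add: sum.cl_ivl_Suc)
  qed
  then show ?thesis using m by simp
qed

definition insert_at :: "nat \<Rightarrow> 'a \<Rightarrow> (nat \<Rightarrow> 'a) \<Rightarrow> nat \<Rightarrow> 'a" where
  "insert_at i x f j = (if j < i then f j else if j = i then x else f (j - 1))"

lemma increasing_insert_at:
  fixes G :: "nat \<Rightarrow> real"
  assumes inc: "\<forall>j\<in>{1..<m}. G j < G (j+1)" and i: "1 \<le> i" "i \<le> m"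
    and x: "x < G i" "1 < i \<Longrightarrow> G (i - 1) < x"
  shows "\<forall>j\<in>{1..<m+1}. insert_at i x G j < insert_at i x G (j + 1)"
proof
  fix j assume j: "j \<in> {1..<m+1}"
  consider "j + 1 < i" | "j + 1 = i" | "j = i" | "j \<ge> i + 1" by linarith
  then show "insert_at i x G j < insert_at i x G (j + 1)"
  proof cases
    case 4
    then have "j - 1 \<in> {1..<m}" using j i by auto
    then have "G (j - 1) < G (j - 1 + 1)" using inc by blast
    then show ?thesis using inc 4 i by (cases "j = i + 1") (auto simp: insert_at_def)
  qed (use inc x j i in \<open>auto simp: insert_at_def Suc_diff_1\<close>)
qed

lemma kempf_ratio_insert_at:
  fixes C S C' S' G :: "nat \<Rightarrow> real"
  assumes i: "1 \<le> i" "i \<le> m"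
    and below: "\<forall>j<i. C' j = C j \<and> S' j = S j"
    and above: "\<forall>j\<ge>i+2. C' j = C (j-1) \<and> S' j = S (j-1)"
    and split: "C' i + C' (i+1) = C i" "S' i + S' (i+1) = S i"
  shows "kempf_ratio C' S' (m+1) (insert_at i (G i - \<delta>) G)
       = ((\<Sum>j=1..m. G j * C j) - \<delta> * C' i)
         / sqrt ((\<Sum>j=1..m. S j * (G j)\<^sup>2) + S' i * (\<delta>\<^sup>2 - 2 * \<delta> * G i))"
proof -
  let ?G' = "insert_at i (G i - \<delta>) G"
  have "(\<Sum>j=1..m+1. ?G' j * C' j)
      = (\<Sum>j=1..m. G j * C j) - G i * C i + ?G' i * C' i + ?G' (i+1) * C' (i+1)"
    by (rule sum_insert_index[OF i]) (auto simp: insert_at_def below above)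
  also have "\<dots> = (\<Sum>j=1..m. G j * C j) - \<delta> * C' i"
    by (simp add: insert_at_def algebra_simps flip: split(1))
  finally have num: "(\<Sum>j=1..m+1. ?G' j * C' j) = (\<Sum>j=1..m. G j * C j) - \<delta> * C' i" .
  have "(\<Sum>j=1..m+1. S' j * (?G' j)\<^sup>2)
      = (\<Sum>j=1..m. S j * (G j)\<^sup>2) - S i * (G i)\<^sup>2 + S' i * (?G' i)\<^sup>2 + S' (i+1) * (?G' (i+1))\<^sup>2"
    by (rule sum_insert_index[OF i]) (auto simp: insert_at_def below above)
  also have "\<dots> = (\<Sum>j=1..m. S j * (G j)\<^sup>2) + S' i * (\<delta>\<^sup>2 - 2 * \<delta> * G i)"
    by (simp add: insert_at_def algebra_simps power2_eq_square flip: split(2))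
  finally show ?thesis by (simp only: kempf_ratio_def num)
qed

lemma split_ratio_gain:
  fixes r l s g b \<delta> :: real
  assumes r: "r > 0" and l: "l > 0" and s: "s > 0" and \<delta>: "0 < \<delta>" "\<delta> \<le> g - l * b"
    and small: "2 * \<delta> * s * (\<bar>g\<bar> + 1) \<le> r"
  shows "sqrt r / l < (r / l - \<delta> * s * b) / sqrt (r + s * (\<delta>\<^sup>2 - 2 * \<delta> * g))"
proof -
  define N where "N = r / l - \<delta> * s * b"
  define R where "R = r + s * (\<delta>\<^sup>2 - 2 * \<delta> * g)"
  have lN: "l * N = r - \<delta> * s * g + \<delta> * s * (g - l * b)"
    using l by (simp add: N_def algebra_simps)
  have \<delta>s: "\<delta> * s > 0" using \<delta> s by simp
  have "\<delta> * s * (- \<bar>g\<bar>) \<le> \<delta> * s * g" "\<delta> * s * g \<le> \<delta> * s * \<bar>g\<bar>"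
    using \<delta>s by (intro mult_left_mono; simp)+
  then have g_bound: "- (\<delta> * s * \<bar>g\<bar>) \<le> \<delta> * s * g" "\<delta> * s * g \<le> \<delta> * s * \<bar>g\<bar>"
    by simp_all
  have "2 * (\<delta> * s * \<bar>g\<bar>) < r"
    using small \<delta>s by (simp add: algebra_simps)
  moreover have "0 \<le> s * \<delta>\<^sup>2" "0 \<le> \<delta> * s * (g - l * b)" using s \<delta> by simp_all
  ultimately have R: "R > 0" and lN_pos: "l * N > 0"
    using g_bound unfolding R_def lN by (simp_all add: algebra_simps)
  have "(l * N)\<^sup>2 - r * R = r * s * \<delta> * (2 * (g - l * b) - \<delta>) + (\<delta> * s * l * b)\<^sup>2"
    using l by (simp add: N_def R_def algebra_simps power2_eq_square)
  moreover have "r * s * \<delta> * (2 * (g - l * b) - \<delta>) > 0" using r s \<delta> by simp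
  ultimately have "sqrt (r * R) < sqrt ((l * N)\<^sup>2)"
    by (intro real_sqrt_less_mono) (smt (verit) zero_le_power2)
  then have "sqrt r * sqrt R < l * N" using lN_pos by (simp add: real_sqrt_mult)
  then have "sqrt r / l < N / sqrt R"
    using l R by (simp add: field_simps)
  then show ?thesis by (simp only: N_def R_def)
qed

lemma kempf_ratio_refine:
  fixes C S C' S' G :: "nat \<Rightarrow> real"
  assumes i: "1 \<le> i" "i \<le> m" and S: "\<forall>j\<in>{1..m}. S j > 0" and S'i: "S' i > 0"
    and below: "\<forall>j<i. C' j = C j \<and> S' j = S j"
    and above: "\<forall>j\<ge>i+2. C' j = C (j-1) \<and> S' j = S (j-1)"
    and split: "C' i + C' (i+1) = C i" "S' i + S' (i+1) = S i"
    and l: "l > 0" and G: "\<forall>j\<in>{1..m}. G j = l * (C j / S j)"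
    and inc: "\<forall>j\<in>{1..<m}. G j < G (j+1)"
    and pos: "kempf_ratio C S m G > 0"
    and lt: "C' i / S' i < C i / S i"
  shows "\<exists>G'. (\<forall>j\<in>{1..<m+1}. G' j < G' (j+1)) \<and> kempf_ratio C S m G < kempf_ratio C' S' (m+1) G'"
proof -
  define r where "r = (\<Sum>j=1..m. S j * (G j)\<^sup>2)"
  define b where "b = C' i / S' i"
  define g where "g = G i"
  have p: "(\<Sum>j=1..m. G j * C j) = r / l"
    unfolding r_def sum_divide_distrib using S G l by (intro sum.cong) (auto simp: field_simps power2_eq_square)
  have ratio_r: "kempf_ratio C S m G = r / l / sqrt r"
    by (simp only: kempf_ratio_def p r_def)
  have "r \<ge> 0" unfolding r_def using S by (auto intro!: sum_nonneg)
  then have r: "r > 0" using pos ratio_r by (cases "r = 0") auto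
  have ratio_G: "kempf_ratio C S m G = sqrt r / l"
    using r by (simp add: ratio_r real_div_sqrt divide_simps)
  have "l * b < l * (C i / S i)" unfolding b_def using lt l by (rule mult_strict_left_mono)
  then have gap: "g - l * b > 0" using G i by (simp add: g_def)
  define bound where "bound = (if 1 < i then G i - G (i - 1) else 1)"
  have "bound > 0"
  proof (cases "1 < i")
    case True
    then have "i - 1 \<in> {1..<m}" using i by auto
    then have "G (i - 1) < G (i - 1 + 1)" using inc by blast
    then show ?thesis using True by (simp add: bound_def)
  qed (simp add: bound_def)
  define B where "B = r / (2 * S' i * (\<bar>g\<bar> + 1))"
  have "B > 0" using r S'i by (simp add: B_def add_pos_nonneg)
  define \<delta> where "\<delta> = min (g - l * b) (min B bound) / 2"
  have \<delta>: "0 < \<delta>" "\<delta> \<le> g - l * b" "\<delta> < bound" "\<delta> \<le> B"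
    using gap \<open>B > 0\<close> \<open>bound > 0\<close> by (auto simp: \<delta>_def)
  have "\<delta> * (2 * S' i * (\<bar>g\<bar> + 1)) \<le> r"
    using \<delta>(4) S'i by (simp add: B_def pos_le_divide_eq add_pos_nonneg)
  then have small: "2 * \<delta> * S' i * (\<bar>g\<bar> + 1) \<le> r" by (simp add: algebra_simps)
  define G' where "G' = insert_at i (g - \<delta>) G"
  have "kempf_ratio C' S' (m+1) G' = (r / l - \<delta> * S' i * b) / sqrt (r + S' i * (\<delta>\<^sup>2 - 2 * \<delta> * g))"
    using kempf_ratio_insert_at[OF i below above split, where G = G and \<delta> = \<delta>] S'i
    unfolding p r_def[symmetric] by (simp add: G'_def g_def b_def)
  then have "kempf_ratio C S m G < kempf_ratio C' S' (m+1) G'"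
    using split_ratio_gain[OF r l S'i \<delta>(1,2) small] by (simp only: ratio_G)
  moreover have "\<forall>j\<in>{1..<m+1}. G' j < G' (j+1)"
    unfolding G'_def using \<delta> by (intro increasing_insert_at[OF inc i]) (auto simp: g_def bound_def)
  ultimately show ?thesis by blast
qed

section \<open>Kempf filtrations\<close>

lemma filtration_insert_at:
  assumes F: "is_filtration d A s t n F" and i: "i \<in> {1..n+1}"
    and W: "is_subrep d A s t W" "\<forall>v. F (i - 1) v \<subseteq> W v \<and> W v \<subseteq> F i v"
    and W_proper: "W \<noteq> F (i - 1)" "W \<noteq> F i"
  shows "is_filtration d A s t (n + 1) (insert_at i W F)"
proof -
  have sub: "is_subrep d A s t (F j)" and chain: "(\<forall>v. F (j - 1) v \<subseteq> F j v) \<and> F (j - 1) \<noteq> F j"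
    if "j \<in> {1..n+1}" for j
    using F that unfolding is_filtration_def by blast+
  have "insert_at i W F 0 = zero_rep" "insert_at i W F (n + 1 + 1) = full_rep d"
    using F i by (auto simp: is_filtration_def insert_at_def)
  moreover have "is_subrep d A s t (insert_at i W F j)" if j: "j \<in> {1..n+1+1}" for j
  proof -
    consider "j < i" | "j = i" | "j = i + 1" | "j \<ge> i + 2" by linarith
    then show ?thesis
    proof cases
      case 4
      then have "j - 1 \<in> {1..n+1}" using j i by auto
      then show ?thesis using sub 4 by (simp add: insert_at_def)
    qed (use sub W j i in \<open>auto simp: insert_at_def\<close>)
  qed
  moreover have "(\<forall>v. insert_at i W F (j - 1) v \<subseteq> insert_at i W F j v)
                 \<and> insert_at i W F (j - 1) \<noteq> insert_at i W F j" if j: "j \<in> {1..n+1+1}" for j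
  proof -
    consider "j < i" | "j = i" | "j = i + 1" | "j \<ge> i + 2" by linarith
    then show ?thesis
    proof cases
      case 1
      then have "j - 1 < i" by simp
      then show ?thesis using chain[of j] 1 j i by (simp add: insert_at_def)
    next
      case 4
      then have "j - 1 \<in> {1..n+1}" "\<not> j - 1 < i" "j - 1 \<noteq> i" using j i by auto
      then show ?thesis using chain[of "j - 1"] 4 by (simp add: insert_at_def)
    qed (use W W_proper i in \<open>auto simp: insert_at_def\<close>)
  qed
  ultimately show ?thesis unfolding is_filtration_def by blast
qed

locale quiver_stability =
  fixes d :: "'v::finite \<Rightarrow> nat"
    and A :: "'a \<Rightarrow> nat \<Rightarrow> nat \<Rightarrow> 'k::field"
    and s t :: "'a \<Rightarrow> 'v"
    and \<Theta> \<sigma> :: "'v \<Rightarrow> int"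
  assumes sigma_pos: "\<forall>v. \<sigma> v > 0"
begin

abbreviation M :: "'v \<Rightarrow> (nat \<Rightarrow> 'k) set" where
  "M \<equiv> full_rep d"

definition factor_coeff :: "(nat \<Rightarrow> 'v \<Rightarrow> (nat \<Rightarrow> 'k) set) \<Rightarrow> nat \<Rightarrow> real" where
  "factor_coeff F j = real_of_int (lin_dim \<Theta> M * lin_sq \<sigma> (F (j - 1)) (F j)
                                 - lin_dim \<sigma> M * lin_sq \<Theta> (F (j - 1)) (F j))"

definition factor_mass :: "(nat \<Rightarrow> 'v \<Rightarrow> (nat \<Rightarrow> 'k) set) \<Rightarrow> nat \<Rightarrow> real" where
  "factor_mass F j = real_of_int (lin_sq \<sigma> (F (j - 1)) (F j))"

definition is_kempf_filtration :: "nat \<Rightarrow> (nat \<Rightarrow> 'v \<Rightarrow> (nat \<Rightarrow> 'k) set) \<Rightarrow> (nat \<Rightarrow> real) \<Rightarrow> bool" where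
  "is_kempf_filtration n F \<Gamma> \<longleftrightarrow> is_weighted_filtration d A s t n F \<Gamma> \<and>
     (\<forall>n' F' \<Gamma>'. is_weighted_filtration d A s t n' F' \<Gamma>' \<longrightarrow>
        kempf_fun d \<Theta> \<sigma> n' F' \<Gamma>' \<le> kempf_fun d \<Theta> \<sigma> n F \<Gamma>)"

lemma kempf_fun_eq_kempf_ratio:
  "kempf_fun d \<Theta> \<sigma> n F \<Gamma> = kempf_ratio (factor_coeff F) (factor_mass F) (n + 1) \<Gamma>"
  unfolding kempf_fun_def kempf_ratio_def factor_coeff_def factor_mass_def by simp

lemma factor_coeff_div_mass:
  assumes "factor_mass F j \<noteq> 0"
  shows "factor_coeff F j / factor_mass F j
       = real_of_int (lin_dim \<Theta> M) - real_of_int (lin_dim \<sigma> M) * slope_sq \<Theta> \<sigma> (F (j - 1)) (F j)"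
  using assms by (simp add: factor_coeff_def factor_mass_def slope_sq_def field_simps)

lemma factor_mass_pos:
  assumes "is_filtration d A s t n F" "j \<in> {1..n+1}"
  shows "factor_mass F j > 0"
proof -
  have "(\<forall>v. F (j - 1) v \<subseteq> F j v) \<and> F (j - 1) \<noteq> F j"
    using assms unfolding is_filtration_def by blast
  moreover have "\<forall>v. V.subspace (F (j - 1) v)" "\<forall>v. F j v \<subseteq> ambient (d v)"
    using filtration_subspace[OF assms(1)] assms(2) by auto
  ultimately show ?thesis
    using lin_sq_pos[OF sigma_pos, of "F (j - 1)" "F j" d] by (simp add: factor_mass_def)
qed

lemma factors_insert_at:
  assumes "1 \<le> i"
  shows "\<forall>j<i. factor_coeff (insert_at i W F) j = factor_coeff F j
               \<and> factor_mass (insert_at i W F) j = factor_mass F j"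
    and "\<forall>j\<ge>i+2. factor_coeff (insert_at i W F) j = factor_coeff F (j - 1)
                 \<and> factor_mass (insert_at i W F) j = factor_mass F (j - 1)"
    and "factor_coeff (insert_at i W F) i + factor_coeff (insert_at i W F) (i + 1) = factor_coeff F i"
    and "factor_mass (insert_at i W F) i + factor_mass (insert_at i W F) (i + 1) = factor_mass F i"
  using assms by (auto simp: factor_coeff_def factor_mass_def insert_at_def lin_sq_def algebra_simps)

lemma destabilizing_subrep:
  assumes "\<not> semistable d A s t \<Theta> \<sigma>"
  obtains U where "is_subrep d A s t U" "\<forall>v. U v \<subseteq> M v"
    and "0 < lin_dim \<sigma> U" "lin_dim \<sigma> U < lin_dim \<sigma> M"
    and "lin_dim \<Theta> M * lin_dim \<sigma> U < lin_dim \<Theta> U * lin_dim \<sigma> M"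
proof -
  obtain U where U: "is_subrep d A s t U" "\<forall>v. zero_rep v \<subseteq> U v \<and> U v \<subseteq> M v"
      "U \<noteq> zero_rep" "U \<noteq> M" "slope_sq \<Theta> \<sigma> zero_rep M < slope_sq \<Theta> \<sigma> zero_rep U"
    using assms unfolding semistable_def semistable_sq_def by force
  have sub: "\<forall>v. V.subspace (U v) \<and> U v \<subseteq> ambient (d v)" using U(1) by (simp add: is_subrep_def)
  have "lin_sq \<sigma> zero_rep U > 0"
    using lin_sq_pos[OF sigma_pos, of zero_rep U] sub U(2,3) by (auto simp: zero_rep_def)
  moreover have "lin_sq \<sigma> U M > 0"
    using lin_sq_pos[OF sigma_pos, of U M] sub U(2,4) by (auto simp: full_rep_def)
  ultimately have \<sigma>U: "0 < lin_dim \<sigma> U" "lin_dim \<sigma> U < lin_dim \<sigma> M"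
    by (simp_all add: lin_sq_def lin_dim_zero)
  have "real_of_int (lin_dim \<Theta> M) / real_of_int (lin_dim \<sigma> M)
        < real_of_int (lin_dim \<Theta> U) / real_of_int (lin_dim \<sigma> U)"
    using U(5) by (simp add: slope_sq_def lin_sq_def lin_dim_zero)
  then have "real_of_int (lin_dim \<Theta> M * lin_dim \<sigma> U) < real_of_int (lin_dim \<Theta> U * lin_dim \<sigma> M)"
    using \<sigma>U by (simp add: divide_less_eq less_divide_eq mult.commute)
  then have "lin_dim \<Theta> M * lin_dim \<sigma> U < lin_dim \<Theta> U * lin_dim \<sigma> M"
    by (simp only: of_int_less_iff)
  then show ?thesis using that U(1,2) \<sigma>U by blast
qed

lemma sigma_full_pos:
  assumes "\<not> semistable d A s t \<Theta> \<sigma>"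
  shows "lin_dim \<sigma> M > 0"
  using destabilizing_subrep[OF assms] by fastforce

text \<open>Witness: the two-step filtration through a destabilizing subrepresentation, with weights 0 and 1.\<close>

lemma kempf_max_pos:
  assumes "is_kempf_filtration n F \<Gamma>" "\<not> semistable d A s t \<Theta> \<sigma>"
  shows "kempf_fun d \<Theta> \<sigma> n F \<Gamma> > 0"
proof -
  obtain U where U: "is_subrep d A s t U" "\<forall>v. U v \<subseteq> M v"
    and \<sigma>U: "0 < lin_dim \<sigma> U" "lin_dim \<sigma> U < lin_dim \<sigma> M"
    and destab: "lin_dim \<Theta> M * lin_dim \<sigma> U < lin_dim \<Theta> U * lin_dim \<sigma> M"
    using destabilizing_subrep[OF assms(2)] by blast
  define F2 where "F2 = (\<lambda>j::nat. if j = 0 then zero_rep else if j = 1 then U else M)"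
  define \<Gamma>2 where "\<Gamma>2 = (\<lambda>j::nat. real j - 1)"
  have "is_filtration d A s t n F"
    using assms(1) by (simp add: is_kempf_filtration_def is_weighted_filtration_def)
  then have "is_subrep d A s t M"
    unfolding is_filtration_def by (metis atLeastAtMost_iff le_add2 order_refl)
  moreover have "U \<noteq> zero_rep" "U \<noteq> M" using \<sigma>U by (auto simp: lin_dim_zero)
  moreover have "\<forall>v. zero_rep v \<subseteq> U v" using U(1) by (simp add: is_subrep_def zero_rep_def V.subspace_0)
  moreover have "{1..1+1} = {1, 2::nat}" by auto
  ultimately have "is_weighted_filtration d A s t 1 F2 \<Gamma>2"
    using U by (simp add: is_weighted_filtration_def is_filtration_def F2_def \<Gamma>2_def)
  then have "kempf_fun d \<Theta> \<sigma> 1 F2 \<Gamma>2 \<le> kempf_fun d \<Theta> \<sigma> n F \<Gamma>"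
    using assms(1) by (simp add: is_kempf_filtration_def)
  moreover have "kempf_fun d \<Theta> \<sigma> 1 F2 \<Gamma>2
      = real_of_int (lin_dim \<Theta> U * lin_dim \<sigma> M - lin_dim \<Theta> M * lin_dim \<sigma> U)
        / sqrt (real_of_int (lin_dim \<sigma> M - lin_dim \<sigma> U))"
    by (simp add: kempf_fun_def F2_def \<Gamma>2_def numeral_2_eq_2 lin_sq_def lin_dim_zero algebra_simps)
  moreover have "\<dots> > 0"
    using destab \<sigma>U by (intro divide_pos_pos) (simp_all del: of_int_diff of_int_mult)
  ultimately show ?thesis by linarith
qed

lemma kempf_weights_proportional:
  assumes "is_kempf_filtration n F \<Gamma>" "kempf_fun d \<Theta> \<sigma> n F \<Gamma> > 0"
  shows "\<exists>l>0. \<forall>j\<in>{1..n+1}. \<Gamma> j = l * (factor_coeff F j / factor_mass F j)"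
proof (rule kempf_ratio_argmax_proportional)
  have F: "is_filtration d A s t n F" "\<forall>i\<in>{1..n}. \<Gamma> i < \<Gamma> (i + 1)"
    using assms(1) by (auto simp: is_kempf_filtration_def is_weighted_filtration_def)
  then show "\<forall>j\<in>{1..n+1}. factor_mass F j > 0" by (auto intro: factor_mass_pos)
  show "\<forall>j\<in>{1..<n+1}. \<Gamma> j < \<Gamma> (j+1)" using F(2) by auto
  show "kempf_ratio (factor_coeff F) (factor_mass F) (n+1) \<Gamma> > 0"
    using assms(2) by (simp add: kempf_fun_eq_kempf_ratio)
  show "\<forall>\<Gamma>'. (\<forall>j\<in>{1..<n+1}. \<Gamma>' j < \<Gamma>' (j+1)) \<longrightarrow>
          kempf_ratio (factor_coeff F) (factor_mass F) (n+1) \<Gamma>'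
          \<le> kempf_ratio (factor_coeff F) (factor_mass F) (n+1) \<Gamma>"
    using assms(1) F(1) unfolding is_kempf_filtration_def is_weighted_filtration_def
    by (simp add: kempf_fun_eq_kempf_ratio)
qed

lemma kempf_slopes_decreasing:
  assumes "is_kempf_filtration n F \<Gamma>" "\<not> semistable d A s t \<Theta> \<sigma>"
  shows "\<forall>i\<in>{1..n}. slope_sq \<Theta> \<sigma> (F (i - 1)) (F i) > slope_sq \<Theta> \<sigma> (F i) (F (i + 1))"
proof
  fix i assume i: "i \<in> {1..n}"
  obtain l where l: "l > 0" and \<Gamma>: "\<forall>j\<in>{1..n+1}. \<Gamma> j = l * (factor_coeff F j / factor_mass F j)"
    using kempf_weights_proportional[OF assms(1) kempf_max_pos[OF assms]] by blast
  have F: "is_filtration d A s t n F" "\<Gamma> i < \<Gamma> (i + 1)"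
    using assms(1) i by (auto simp: is_kempf_filtration_def is_weighted_filtration_def)
  have "\<Gamma> i = l * (factor_coeff F i / factor_mass F i)"
       "\<Gamma> (i + 1) = l * (factor_coeff F (i + 1) / factor_mass F (i + 1))"
    using \<Gamma> i by force+
  then have "factor_coeff F i / factor_mass F i < factor_coeff F (i + 1) / factor_mass F (i + 1)"
    using F(2) l by (simp only: mult_less_cancel_left_pos)
  moreover have "factor_mass F i > 0" "factor_mass F (i + 1) > 0"
    using factor_mass_pos[OF F(1)] i by auto
  then have "factor_mass F i \<noteq> 0" "factor_mass F (i + 1) \<noteq> 0" by simp_all
  ultimately show "slope_sq \<Theta> \<sigma> (F (i - 1)) (F i) > slope_sq \<Theta> \<sigma> (F i) (F (i + 1))"
    using sigma_full_pos[OF assms(2)] by (simp add: factor_coeff_div_mass)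
qed

lemma kempf_factors_semistable:
  assumes "is_kempf_filtration n F \<Gamma>" "\<not> semistable d A s t \<Theta> \<sigma>"
  shows "\<forall>i\<in>{1..n+1}. semistable_sq d A s t \<Theta> \<sigma> (F (i - 1)) (F i)"
  unfolding semistable_sq_def
proof (intro ballI allI impI)
  fix i W assume i: "i \<in> {1..n+1}"
    and W: "is_subrep d A s t W" "\<forall>v. F (i - 1) v \<subseteq> W v \<and> W v \<subseteq> F i v"
    and W_proper: "W \<noteq> F (i - 1)" "W \<noteq> F i"
  show "slope_sq \<Theta> \<sigma> (F (i - 1)) W \<le> slope_sq \<Theta> \<sigma> (F (i - 1)) (F i)"
  proof (rule ccontr)
    assume "\<not> ?thesis"
    then have "real_of_int (lin_dim \<sigma> M) * slope_sq \<Theta> \<sigma> (F (i - 1)) (F i)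
             < real_of_int (lin_dim \<sigma> M) * slope_sq \<Theta> \<sigma> (F (i - 1)) W"
      using sigma_full_pos[OF assms(2)] by simp
    define F' where "F' = insert_at i W F"
    have F: "is_filtration d A s t n F" "\<forall>j\<in>{1..<n+1}. \<Gamma> j < \<Gamma> (j+1)"
      using assms(1) by (auto simp: is_kempf_filtration_def is_weighted_filtration_def)
    have F': "is_filtration d A s t (n + 1) F'"
      unfolding F'_def using filtration_insert_at[OF F(1) i W W_proper] .
    have mass: "\<forall>j\<in>{1..n+1}. factor_mass F j > 0" "factor_mass F' i > 0"
      using factor_mass_pos[OF F(1)] factor_mass_pos[OF F', of i] i by auto
    have "F' (i - 1) = F (i - 1)" "F' i = W" using i by (simp_all add: F'_def insert_at_def)
    moreover have "factor_mass F i \<noteq> 0" using mass(1) i by force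
    ultimately have lt: "factor_coeff F' i / factor_mass F' i < factor_coeff F i / factor_mass F i"
      using factor_coeff_div_mass[of F' i] factor_coeff_div_mass[of F i] mass i
        \<open>real_of_int (lin_dim \<sigma> M) * _ < _\<close> by simp
    obtain l where l: "l > 0" and \<Gamma>: "\<forall>j\<in>{1..n+1}. \<Gamma> j = l * (factor_coeff F j / factor_mass F j)"
      using kempf_weights_proportional[OF assms(1) kempf_max_pos[OF assms]] by blast
    have pos: "kempf_ratio (factor_coeff F) (factor_mass F) (n + 1) \<Gamma> > 0"
      using kempf_max_pos[OF assms] by (simp add: kempf_fun_eq_kempf_ratio)
    have "1 \<le> i" "i \<le> n + 1" using i by auto
    note split = factors_insert_at[OF \<open>1 \<le> i\<close>, of W F, folded F'_def]
    obtain \<Gamma>' where \<Gamma>': "\<forall>j\<in>{1..<n+1+1}. \<Gamma>' j < \<Gamma>' (j+1)"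
        and "kempf_ratio (factor_coeff F) (factor_mass F) (n + 1) \<Gamma>
             < kempf_ratio (factor_coeff F') (factor_mass F') (n + 1 + 1) \<Gamma>'"
      using kempf_ratio_refine[OF \<open>1 \<le> i\<close> \<open>i \<le> n + 1\<close> mass split l \<Gamma> F(2) pos lt] by blast
    then have "kempf_fun d \<Theta> \<sigma> n F \<Gamma> < kempf_fun d \<Theta> \<sigma> (n + 1) F' \<Gamma>'"
      by (simp add: kempf_fun_eq_kempf_ratio)
    moreover have "is_weighted_filtration d A s t (n + 1) F' \<Gamma>'"
      using F' \<Gamma>' by (simp add: is_weighted_filtration_def)
    ultimately show False
      using assms(1) unfolding is_kempf_filtration_def by fastforce
  qed
qed

end

theorem theorem5p3:
  fixes d :: "'v::finite \<Rightarrow> nat"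
    and A :: "'a::finite \<Rightarrow> nat \<Rightarrow> nat \<Rightarrow> 'k::field"
    and s t :: "'a \<Rightarrow> 'v"
    and \<Theta> \<sigma> :: "'v \<Rightarrow> int"
    and n :: nat
    and F :: "nat \<Rightarrow> 'v \<Rightarrow> (nat \<Rightarrow> 'k) set"
    and \<Gamma> :: "nat \<Rightarrow> real"
  assumes "alg_closed TYPE('k)"
    and "\<forall>v. \<sigma> v > 0"
    and "\<not> semistable d A s t \<Theta> \<sigma>"
    and "is_weighted_filtration d A s t n F \<Gamma>"
    and "\<forall>n' F' \<Gamma>'. is_weighted_filtration d A s t n' F' \<Gamma>' \<longrightarrow>
           kempf_fun d \<Theta> \<sigma> n' F' \<Gamma>' \<le> kempf_fun d \<Theta> \<sigma> n F \<Gamma>"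
  shows "is_HN_filtration d A s t \<Theta> \<sigma> n F"
proof -
  interpret quiver_stability d A s t \<Theta> \<sigma>
    using assms(2) by unfold_locales
  have kempf: "is_kempf_filtration n F \<Gamma>"
    using assms(4,5) by (simp add: is_kempf_filtration_def)
  then have "is_filtration d A s t n F"
    by (simp add: is_kempf_filtration_def is_weighted_filtration_def)
  then show ?thesis
    unfolding is_HN_filtration_def
    using kempf_slopes_decreasing[OF kempf assms(3)] kempf_factors_semistable[OF kempf assms(3)]
    by blast
qed

end
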